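(* Let $d\ge 1$, $T>0$, $p\in[1,+\infty)$ and $u\in L^p(\mathbb{T}_T^d)$. Then for every $s\in(0,1)$ and every $R>2T\sqrt{d}$, \[ [u]_{s,p}^p|_{B_R}+ \frac{d\,\omega_d \left(\frac{R}{T}+2\sqrt{d}\right)^{-sp}}{sp\,(T\,c_1(R,d))^{d+sp}}\,\mathcal{F}_p^0(u) \;\leq\; \mathcal{F}_p^s (u) \;\leq\; [u]_{s,p}^p|_{B_R} + \frac{d\,\omega_d \left(\frac{R}{T}-2\sqrt{d}\right)^{-sp}}{sp\,(T\,c_2(R,d))^{d+sp}}\,\mathcal{F}_p^0(u), \] where \[ c_1(R,d)=\frac{R+2T\sqrt{d}}{R+T\sqrt{d}},\qquad c_2(R,d)=\frac{R-2T\sqrt{d}}{R-T\sqrt{d}} \] (all quantities take values in $[0,+\infty]$).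
   Context: $Q_T=[0,T]^d$, $(e_1,\dots,e_d)$ the canonical basis of $\mathbb{R}^d$. $L^p(\mathbb{T}_T^d)$ is the space of measurable $u:\mathbb{R}^d\to\mathbb{R}$ with $u(x+Te_i)=u(x)$ for a.e. $x$ and all $i$, and $u|_{Q_T}\in L^p(Q_T)$. For $s\in(0,1)$, \[ \mathcal{F}_p^s(u)=\int_{Q_T}\int_{\mathbb{R}^d}\frac{|u(x)-u(y)|^p}{|x-y|^{d+sp}}\,\mathrm{d}y\,\mathrm{d}x,\qquad \mathcal{F}_p^0(u)=\int_{Q_T}\int_{Q_T}|u(x)-u(y)|^p\,\mathrm{d}y\,\mathrm{d}x, \] and for a set $E\subset\mathbb{R}^d$, $[u]_{s,p}^p|_{E}=\int_{Q_T}\int_E \frac{|u(x)-u(y)|^p}{|x-y|^{d+sp}}\,\mathrm{d}y\,\mathrm{d}x$. $B_R$ is the open ball of radius $R$ centred at $0$. $\omega_d$ denotes the Lebesgue measure of the unit ball of $\mathbb{R}^d$, so that $d\,\omega_d=\mathcal{H}^{d-1}(\mathbb{S}^{d-1})$. *)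

theory Defs
  imports "HOL-Analysis.Analysis"
begin

definition cell :: "real \<Rightarrow> 'a::euclidean_space set" where
  "cell T = cbox 0 (T *\<^sub>R One)"

definition Lp_torus :: "real \<Rightarrow> real \<Rightarrow> ('a::euclidean_space \<Rightarrow> real) \<Rightarrow> bool" where
  "Lp_torus T p u \<longleftrightarrow> u \<in> borel_measurable lebesgue \<and>
     (\<forall>i\<in>Basis. AE x in lebesgue. u (x + T *\<^sub>R i) = u x) \<and>
     (\<integral>\<^sup>+ x\<in>cell T. ennreal (\<bar>u x\<bar> powr p) \<partial>lebesgue) < \<infinity>"

definition gag_restr :: "real \<Rightarrow> real \<Rightarrow> real \<Rightarrow> ('a::euclidean_space \<Rightarrow> real) \<Rightarrow> 'a set \<Rightarrow> ennreal" where
  "gag_restr T s p u E =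
     (\<integral>\<^sup>+ x\<in>cell T. (\<integral>\<^sup>+ y\<in>E.
        ennreal (\<bar>u x - u y\<bar> powr p / norm (x - y) powr (real DIM('a) + s * p)) \<partial>lebesgue) \<partial>lebesgue)"

definition Fs :: "real \<Rightarrow> real \<Rightarrow> real \<Rightarrow> ('a::euclidean_space \<Rightarrow> real) \<Rightarrow> ennreal" where
  "Fs T s p u = gag_restr T s p u UNIV"

definition F0 :: "real \<Rightarrow> real \<Rightarrow> ('a::euclidean_space \<Rightarrow> real) \<Rightarrow> ennreal" where
  "F0 T p u = (\<integral>\<^sup>+ x\<in>cell T. (\<integral>\<^sup>+ y\<in>cell T. ennreal (\<bar>u x - u y\<bar> powr p) \<partial>lebesgue) \<partial>lebesgue)"

definition omega :: "'a::euclidean_space itself \<Rightarrow> real" where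
  "omega _ = measure lebesgue (ball (0::'a) 1)"

definition c1 :: "real \<Rightarrow> real \<Rightarrow> real \<Rightarrow> real" where
  "c1 T R d = (R + 2 * T * sqrt d) / (R + T * sqrt d)"

definition c2 :: "real \<Rightarrow> real \<Rightarrow> real \<Rightarrow> real" where
  "c2 T R d = (R - 2 * T * sqrt d) / (R - T * sqrt d)"

end

theory Submission
  imports Defs
begin

text \<open>
  Split the inner integral of \<open>F_p^s(u)\<close> into the ball \<open>B_R\<close> and its complement. On the
  complement write \<open>y = z + T k\<close> with \<open>z\<close> in the half-open cell and \<open>k \<in> \<int>^d\<close>; by periodicity
  \<open>u y = u z\<close>, so the complement contributes the integral over \<open>x, z \<in> Q_T\<close> of
  \<open>|u x - u z|^p G(x, z)\<close>, where \<open>G(x, z)\<close> sums \<open>|x - z - T k|^-(d+sp)\<close> over those \<open>k\<close> with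
  \<open>|z + T k| \<ge> R\<close>. Since \<open>|x| \<le> T sqrt d\<close> and the cell has diameter \<open>T sqrt d\<close>, every term of
  this lattice sum is comparable, up to the factors \<open>c_1^(d+sp)\<close> and \<open>c_2^-(d+sp)\<close>, with the mean
  of \<open>|x - y|^-(d+sp)\<close> over the translated cell \<open>Q_T + T k\<close>. Summing over \<open>k\<close> bounds \<open>T^d G(x, z)\<close>
  by integrals of \<open>|x - y|^-(d+sp)\<close> outside balls of radius \<open>R \<plusminus> 2 T sqrt d\<close>, which equal
  \<open>d \<omega>_d (R \<plusminus> 2 T sqrt d)^-sp / sp\<close>; the constants of the theorem are these bounds rewritten.
\<close>

section \<open>The cell and the integer lattice\<close>

lemma cell_nonneg_components:
  assumes "x \<in> cell T" "i \<in> Basis"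
  shows "0 \<le> x \<bullet> i" "x \<bullet> i \<le> T"
  using assms by (auto simp: cell_def mem_box)

lemma norm_diff_cell_le:
  fixes x y :: "'a::euclidean_space"
  assumes x: "x \<in> cell T" and y: "y \<in> cell T"
  shows "norm (x - y) \<le> T * sqrt DIM('a)"
proof -
  have "T \<ge> 0"
    using cell_nonneg_components[OF x SOME_Basis] by linarith
  have "norm (x - y) = L2_set (\<lambda>i. dist (x \<bullet> i) (y \<bullet> i)) Basis"
    by (metis dist_norm euclidean_dist_l2)
  also have "\<dots> \<le> L2_set (\<lambda>i. T) (Basis::'a set)"
  proof (rule L2_set_mono)
    fix i :: 'a assume "i \<in> Basis"
    then show "dist (x \<bullet> i) (y \<bullet> i) \<le> T"
      using cell_nonneg_components[OF x] cell_nonneg_components[OF y]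
      by (force simp: dist_real_def abs_le_iff)
  qed simp
  also have "\<dots> = T * sqrt DIM('a)"
    using \<open>T \<ge> 0\<close> by (simp add: L2_set_constant)
  finally show ?thesis .
qed

lemma norm_cell_le:
  fixes x :: "'a::euclidean_space"
  assumes "x \<in> cell T"
  shows "norm x \<le> T * sqrt DIM('a)"
proof -
  have "0 \<in> (cell T :: 'a set)"
    using assms by (auto simp: cell_def mem_box intro: order_trans)
  then show ?thesis
    using norm_diff_cell_le[OF assms] by fastforce
qed

definition int_lattice :: "'a::euclidean_space set" where
  "int_lattice = {k. \<forall>i\<in>Basis. k \<bullet> i \<in> \<int>}"

lemma countable_int_lattice: "countable (int_lattice :: 'a::euclidean_space set)"
proof -
  let ?g = "\<lambda>f::'a \<Rightarrow> int. \<Sum>i\<in>Basis. of_int (f i) *\<^sub>R i"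
  have "int_lattice \<subseteq> ?g ` (Basis \<rightarrow>\<^sub>E (UNIV :: int set))"
  proof
    fix k :: 'a assume k: "k \<in> int_lattice"
    let ?f = "restrict (\<lambda>i. \<lfloor>k \<bullet> i\<rfloor>) Basis"
    have "?g ?f = (\<Sum>i\<in>Basis. (k \<bullet> i) *\<^sub>R i)"
      using k by (intro sum.cong) (auto simp: int_lattice_def elim!: Ints_cases)
    then show "k \<in> ?g ` (Basis \<rightarrow>\<^sub>E UNIV)"
      by (intro image_eqI[of _ _ ?f]) (auto simp: euclidean_representation)
  qed
  then show ?thesis
    by (rule countable_subset) (intro countable_image countable_PiE; simp)
qed

text \<open>Half-open, so that its translates by \<open>T \<int>^d\<close> tile the space disjointly; it differs from
  \<^const>\<open>cell\<close> by a null set.\<close>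

definition half_open_cell :: "real \<Rightarrow> 'a::euclidean_space set" where
  "half_open_cell T = {x. \<forall>i\<in>Basis. 0 \<le> x \<bullet> i \<and> x \<bullet> i < T}"

lemma half_open_cell_subset_cell: "half_open_cell T \<subseteq> cell T"
  by (auto simp: half_open_cell_def cell_def mem_box less_imp_le)

lemma box_subset_half_open_cell: "box 0 (T *\<^sub>R One) \<subseteq> half_open_cell T"
  by (fastforce simp: half_open_cell_def mem_box)

lemma half_open_cell_borel [measurable]: "half_open_cell T \<in> sets (borel :: 'a::euclidean_space measure)"
proof -
  have "half_open_cell T = (\<Inter>i\<in>(Basis::'a set). {x. 0 \<le> x \<bullet> i} \<inter> {x. x \<bullet> i < T})"
    by (auto simp: half_open_cell_def)
  also have "\<dots> \<in> sets borel"
    by (intro sets.finite_INT sets.Int borel_closed borel_open closed_halfspace_component_ge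
        open_halfspace_component_lt) auto
  finally show ?thesis .
qed

lemma half_open_cell_lebesgue [measurable]: "half_open_cell T \<in> sets (lebesgue :: 'a::euclidean_space measure)"
  by (intro sets_completionI_sets) simp

lemma AE_half_open_cell_eq_cell:
  "AE z in lebesgue. z \<in> half_open_cell T \<longleftrightarrow> z \<in> (cell T :: 'a::euclidean_space set)"
proof -
  have "cell T - box 0 (T *\<^sub>R One) \<in> null_sets (lebesgue :: 'a measure)"
    unfolding cell_def by (simp flip: negligible_iff_null_sets add: negligible_frontier_interval)
  then have "AE z in lebesgue. z \<notin> cell T - box 0 (T *\<^sub>R One :: 'a)"
    by (rule AE_not_in)
  then show ?thesis
  proof eventually_elim
    case (elim z)
    then show ?case
      using half_open_cell_subset_cell box_subset_half_open_cell by blast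
  qed
qed

lemma emeasure_half_open_cell:
  assumes "T \<ge> 0"
  shows "emeasure lebesgue (half_open_cell T :: 'a::euclidean_space set) = ennreal (T ^ DIM('a))"
proof -
  have "emeasure lebesgue (half_open_cell T :: 'a set) = emeasure lebesgue (cell T :: 'a set)"
    by (intro emeasure_eq_AE AE_half_open_cell_eq_cell) (auto simp: cell_def)
  also have "\<dots> = ennreal (T ^ DIM('a))"
    using assms by (simp add: cell_def emeasure_lborel_cbox_eq inner_diff_left prod_constant)
  finally show ?thesis .
qed

lemma int_lattice_shift_into_half_open_cell:
  fixes y :: "'a::euclidean_space"
  assumes "T > 0"
  obtains k where "k \<in> int_lattice" "y - T *\<^sub>R k \<in> half_open_cell T"
proof
  define k :: 'a where "k = (\<Sum>i\<in>Basis. of_int \<lfloor>(y \<bullet> i) / T\<rfloor> *\<^sub>R i)"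
  have ki: "k \<bullet> i = of_int \<lfloor>(y \<bullet> i) / T\<rfloor>" if "i \<in> Basis" for i
    using that by (simp add: k_def inner_sum_left inner_Basis if_distrib cong: if_cong)
  then show "k \<in> int_lattice"
    by (auto simp: int_lattice_def)
  show "y - T *\<^sub>R k \<in> half_open_cell T"
    unfolding half_open_cell_def
  proof safe
    fix i :: 'a assume i: "i \<in> Basis"
    have "of_int \<lfloor>(y \<bullet> i) / T\<rfloor> \<le> (y \<bullet> i) / T" "(y \<bullet> i) / T < of_int \<lfloor>(y \<bullet> i) / T\<rfloor> + 1"
      by linarith+
    with assms have "T * of_int \<lfloor>(y \<bullet> i) / T\<rfloor> \<le> y \<bullet> i" "y \<bullet> i < T * of_int \<lfloor>(y \<bullet> i) / T\<rfloor> + T"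
      by (simp_all add: le_divide_eq divide_less_eq algebra_simps)
    then show "0 \<le> (y - T *\<^sub>R k) \<bullet> i" "(y - T *\<^sub>R k) \<bullet> i < T"
      using ki[OF i] by (simp_all add: inner_diff_left)
  qed
qed

lemma int_lattice_shift_into_half_open_cell_unique:
  fixes y :: "'a::euclidean_space"
  assumes "T > 0" "k \<in> int_lattice" "k' \<in> int_lattice"
    and "y - T *\<^sub>R k \<in> half_open_cell T" "y - T *\<^sub>R k' \<in> half_open_cell T"
  shows "k = k'"
proof (rule euclidean_eqI)
  fix i :: 'a assume i: "i \<in> Basis"
  obtain m where "k \<bullet> i = of_int m"
    using assms(2) i by (auto simp: int_lattice_def elim!: Ints_cases)
  moreover obtain m' where "k' \<bullet> i = of_int m'"
    using assms(3) i by (auto simp: int_lattice_def elim!: Ints_cases)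
  ultimately have m: "k \<bullet> i = of_int m" "k' \<bullet> i = of_int m'" .
  have "0 \<le> y \<bullet> i - T * of_int m" "y \<bullet> i - T * of_int m < T"
       "0 \<le> y \<bullet> i - T * of_int m'" "y \<bullet> i - T * of_int m' < T"
    using assms(4,5) i m by (auto simp: half_open_cell_def inner_diff_left)
  then have "T * of_int m < T * (of_int m' + 1)" "T * of_int m' < T * (of_int m + 1)"
    by (auto simp: algebra_simps)
  then have "of_int m < (of_int (m' + 1) :: real)" "of_int m' < (of_int (m + 1) :: real)"
    using assms(1) by (auto simp: mult_less_cancel_left_pos)
  then have "m = m'"
    unfolding of_int_less_iff by linarith
  then show "k \<bullet> i = k' \<bullet> i"
    using m by simp
qed

lemma nn_integral_int_lattice_tile_indicator:
  fixes y :: "'a::euclidean_space"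
  assumes "T > 0"
  shows "(\<integral>\<^sup>+k. indicator (half_open_cell T) (y - T *\<^sub>R k) \<partial>count_space int_lattice) = 1"
proof -
  obtain k0 where k0: "k0 \<in> int_lattice" "y - T *\<^sub>R k0 \<in> half_open_cell T"
    using int_lattice_shift_into_half_open_cell[OF assms] .
  have "(\<integral>\<^sup>+k. indicator (half_open_cell T) (y - T *\<^sub>R k) \<partial>count_space int_lattice)
      = (\<integral>\<^sup>+k. indicator {k0} k \<partial>count_space int_lattice)"
  proof (rule nn_integral_cong)
    fix k :: 'a assume "k \<in> space (count_space int_lattice)"
    then have "y - T *\<^sub>R k \<in> half_open_cell T \<longleftrightarrow> k = k0"
      using int_lattice_shift_into_half_open_cell_unique[OF assms _ k0(1) _ k0(2)] k0(2) by auto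
    then show "indicator (half_open_cell T) (y - T *\<^sub>R k) = (indicator {k0} k :: ennreal)"
      by (simp add: indicator_def)
  qed
  also have "\<dots> = 1"
    using k0(1) by (simp add: emeasure_count_space_finite)
  finally show ?thesis .
qed

section \<open>Periodization of integrals\<close>

lemma lebesgue_translation:
  fixes a :: "'a::euclidean_space"
  shows "distr lebesgue lebesgue (\<lambda>x. x + a) = lebesgue"
    and "(\<lambda>x. x + a) \<in> lebesgue \<rightarrow>\<^sub>M (lebesgue :: 'a measure)"
proof -
  have shift: "(\<lambda>x. a + (\<Sum>j\<in>Basis. (1 * (x \<bullet> j)) *\<^sub>R j)) = (\<lambda>x::'a. x + a)"
    by (simp add: euclidean_representation add.commute)
  show "distr lebesgue lebesgue (\<lambda>x. x + a) = lebesgue"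
    using lebesgue_affine_euclidean[of "\<lambda>_. 1" a, unfolded shift] by (simp add: density_1)
  show "(\<lambda>x. x + a) \<in> lebesgue \<rightarrow>\<^sub>M (lebesgue :: 'a measure)"
    using lebesgue_affine_measurable[of "\<lambda>_. 1" a, unfolded shift] by simp
qed

lemma measurable_lebesgue_translate:
  fixes a :: "'a::euclidean_space"
  assumes "g \<in> lebesgue \<rightarrow>\<^sub>M M"
  shows "(\<lambda>x. g (x + a)) \<in> lebesgue \<rightarrow>\<^sub>M M"
  using measurable_compose[OF lebesgue_translation(2) assms] .

lemma nn_integral_lebesgue_translate:
  fixes a :: "'a::euclidean_space"
  assumes "g \<in> borel_measurable lebesgue"
  shows "(\<integral>\<^sup>+x. g (x + a) \<partial>lebesgue) = (\<integral>\<^sup>+y. g y \<partial>lebesgue)"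
proof -
  have "(\<integral>\<^sup>+y. g y \<partial>lebesgue) = (\<integral>\<^sup>+y. g y \<partial>distr lebesgue lebesgue (\<lambda>x. x + a))"
    by (simp only: lebesgue_translation(1))
  also have "\<dots> = (\<integral>\<^sup>+x. g (x + a) \<partial>lebesgue)"
    by (rule nn_integral_distr[OF lebesgue_translation(2)]) (simp add: assms)
  finally show ?thesis ..
qed

lemma AE_lebesgue_translate:
  fixes a :: "'a::euclidean_space"
  assumes "AE y in lebesgue. P y"
  shows "AE x in lebesgue. P (x + a)"
proof -
  have "AE y in distr lebesgue lebesgue (\<lambda>x. x + a). P y"
    using assms by (subst lebesgue_translation(1))
  then show ?thesis
    by (rule AE_distrD[OF lebesgue_translation(2)])
qed

lemma nn_integral_lattice_tiles:
  fixes g :: "'a::euclidean_space \<Rightarrow> ennreal"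
  assumes T: "T > 0" and g: "g \<in> borel_measurable lebesgue"
  shows "(\<integral>\<^sup>+y. g y \<partial>lebesgue)
       = (\<integral>\<^sup>+k. (\<integral>\<^sup>+v\<in>half_open_cell T. g (v + T *\<^sub>R k) \<partial>lebesgue) \<partial>count_space int_lattice)"
proof -
  have tile_meas: "(\<lambda>y. g y * indicator (half_open_cell T) (y - T *\<^sub>R k)) \<in> borel_measurable lebesgue" for k
    using g measurable_lebesgue_translate[of "indicator (half_open_cell T)" borel "- T *\<^sub>R k"]
    by (intro borel_measurable_times_ennreal) auto
  have "(\<integral>\<^sup>+y. g y \<partial>lebesgue)
      = (\<integral>\<^sup>+y. (\<integral>\<^sup>+k. g y * indicator (half_open_cell T) (y - T *\<^sub>R k) \<partial>count_space int_lattice) \<partial>lebesgue)"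
    by (simp add: nn_integral_cmult nn_integral_int_lattice_tile_indicator[OF T])
  also have "\<dots> = (\<integral>\<^sup>+k. (\<integral>\<^sup>+y. g y * indicator (half_open_cell T) (y - T *\<^sub>R k) \<partial>lebesgue) \<partial>count_space int_lattice)"
    using countable_int_lattice tile_meas by (rule nn_integral_count_space_nn_integral)
  also have "\<dots> = (\<integral>\<^sup>+k. (\<integral>\<^sup>+v\<in>half_open_cell T. g (v + T *\<^sub>R k) \<partial>lebesgue) \<partial>count_space int_lattice)"
  proof (rule nn_integral_cong)
    fix k
    show "(\<integral>\<^sup>+y. g y * indicator (half_open_cell T) (y - T *\<^sub>R k) \<partial>lebesgue)
        = (\<integral>\<^sup>+v\<in>half_open_cell T. g (v + T *\<^sub>R k) \<partial>lebesgue)"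
      using nn_integral_lebesgue_translate[OF tile_meas[of k], of "T *\<^sub>R k"] by simp
  qed
  finally show ?thesis .
qed

lemma nn_integral_periodize:
  fixes g :: "'a::euclidean_space \<Rightarrow> ennreal"
  assumes T: "T > 0" and g: "g \<in> borel_measurable lebesgue"
  shows "(\<integral>\<^sup>+y. g y \<partial>lebesgue)
       = (\<integral>\<^sup>+v\<in>half_open_cell T. (\<integral>\<^sup>+k. g (v + T *\<^sub>R k) \<partial>count_space int_lattice) \<partial>lebesgue)"
proof -
  have "(\<lambda>v. g (v + T *\<^sub>R k) * indicator (half_open_cell T) v) \<in> borel_measurable lebesgue" for k
    using measurable_lebesgue_translate[OF g] by (intro borel_measurable_times_ennreal) auto
  then have "(\<integral>\<^sup>+y. g y \<partial>lebesgue)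
      = (\<integral>\<^sup>+v. (\<integral>\<^sup>+k. g (v + T *\<^sub>R k) * indicator (half_open_cell T) v \<partial>count_space int_lattice) \<partial>lebesgue)"
    by (simp add: nn_integral_lattice_tiles[OF assms] nn_integral_count_space_nn_integral[OF countable_int_lattice])
  also have "\<dots> = (\<integral>\<^sup>+v\<in>half_open_cell T. (\<integral>\<^sup>+k. g (v + T *\<^sub>R k) \<partial>count_space int_lattice) \<partial>lebesgue)"
    by (simp add: nn_integral_multc)
  finally show ?thesis .
qed

lemma set_nn_integral_half_open_cell_const:
  assumes "T \<ge> 0"
  shows "(\<integral>\<^sup>+v\<in>(half_open_cell T :: 'a::euclidean_space set). c \<partial>lebesgue) = c * ennreal (T ^ DIM('a))"
  by (simp only: nn_integral_cmult_indicator[OF half_open_cell_lebesgue] emeasure_half_open_cell[OF assms])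

lemma lattice_sum_le_nn_integral:
  fixes g t :: "'a::euclidean_space \<Rightarrow> ennreal"
  assumes T: "T > 0" and g: "g \<in> borel_measurable lebesgue"
    and le: "\<And>k v. k \<in> int_lattice \<Longrightarrow> v \<in> half_open_cell T \<Longrightarrow> t k \<le> g (v + T *\<^sub>R k)"
  shows "ennreal (T ^ DIM('a)) * (\<integral>\<^sup>+k. t k \<partial>count_space int_lattice) \<le> (\<integral>\<^sup>+y. g y \<partial>lebesgue)"
proof -
  have "ennreal (T ^ DIM('a)) * (\<integral>\<^sup>+k. t k \<partial>count_space int_lattice)
      = (\<integral>\<^sup>+k. (\<integral>\<^sup>+v\<in>(half_open_cell T :: 'a set). t k \<partial>lebesgue) \<partial>count_space int_lattice)"
    using T by (simp only: set_nn_integral_half_open_cell_const less_imp_le)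
      (simp add: nn_integral_multc borel_measurable_count_space mult.commute)
  also have "\<dots> \<le> (\<integral>\<^sup>+k. (\<integral>\<^sup>+v\<in>half_open_cell T. g (v + T *\<^sub>R k) \<partial>lebesgue) \<partial>count_space int_lattice)"
    using le by (auto intro!: nn_integral_mono split: split_indicator)
  also have "\<dots> = (\<integral>\<^sup>+y. g y \<partial>lebesgue)"
    by (rule nn_integral_lattice_tiles[OF T g, symmetric])
  finally show ?thesis .
qed

lemma nn_integral_le_lattice_sum:
  fixes g t :: "'a::euclidean_space \<Rightarrow> ennreal"
  assumes T: "T > 0" and g: "g \<in> borel_measurable lebesgue"
    and le: "\<And>k v. k \<in> int_lattice \<Longrightarrow> v \<in> half_open_cell T \<Longrightarrow> g (v + T *\<^sub>R k) \<le> t k"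
  shows "(\<integral>\<^sup>+y. g y \<partial>lebesgue) \<le> ennreal (T ^ DIM('a)) * (\<integral>\<^sup>+k. t k \<partial>count_space int_lattice)"
proof -
  have "(\<integral>\<^sup>+y. g y \<partial>lebesgue)
      = (\<integral>\<^sup>+k. (\<integral>\<^sup>+v\<in>half_open_cell T. g (v + T *\<^sub>R k) \<partial>lebesgue) \<partial>count_space int_lattice)"
    by (rule nn_integral_lattice_tiles[OF T g])
  also have "\<dots> \<le> (\<integral>\<^sup>+k. (\<integral>\<^sup>+v\<in>(half_open_cell T :: 'a set). t k \<partial>lebesgue) \<partial>count_space int_lattice)"
    using le by (auto intro!: nn_integral_mono split: split_indicator)
  also have "\<dots> = ennreal (T ^ DIM('a)) * (\<integral>\<^sup>+k. t k \<partial>count_space int_lattice)"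
    using T by (simp only: set_nn_integral_half_open_cell_const less_imp_le)
      (simp add: nn_integral_multc borel_measurable_count_space mult.commute)
  finally show ?thesis .
qed

definition ae_periods :: "('a::euclidean_space \<Rightarrow> 'b) \<Rightarrow> 'a set" where
  "ae_periods u = {a. AE x in lebesgue. u (x + a) = u x}"

lemma ae_periods_add:
  assumes "a \<in> ae_periods u" "b \<in> ae_periods u"
  shows "a + b \<in> ae_periods u"
proof -
  have "AE x in lebesgue. u ((x + a) + b) = u (x + a)"
    using assms(2) unfolding ae_periods_def by (intro AE_lebesgue_translate) simp
  moreover have "AE x in lebesgue. u (x + a) = u x"
    using assms(1) by (simp add: ae_periods_def)
  ultimately show ?thesis
    unfolding ae_periods_def mem_Collect_eq by eventually_elim (simp add: add.assoc)
qed

lemma ae_periods_uminus: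
  assumes "a \<in> ae_periods u"
  shows "- a \<in> ae_periods u"
proof -
  have "AE x in lebesgue. u ((x + - a) + a) = u (x + - a)"
    using assms unfolding ae_periods_def by (intro AE_lebesgue_translate) simp
  then show ?thesis
    unfolding ae_periods_def mem_Collect_eq by eventually_elim simp
qed

lemma ae_periods_sum:
  assumes "finite F" "\<And>i. i \<in> F \<Longrightarrow> f i \<in> ae_periods u"
  shows "(\<Sum>i\<in>F. f i) \<in> ae_periods u"
  using assms by (induction F rule: finite_induct) (auto simp: ae_periods_add, simp add: ae_periods_def)

lemma ae_periods_of_int_scaleR:
  assumes "a \<in> ae_periods u"
  shows "of_int m *\<^sub>R a \<in> ae_periods u"
proof -
  have nat_mult: "of_nat n *\<^sub>R a \<in> ae_periods u" for n
    using ae_periods_sum[of "{..<n}" "\<lambda>_. a" u] assms by (simp add: sum_constant_scaleR)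
  show ?thesis
  proof (cases "m \<ge> 0")
    case True
    then show ?thesis
      using nat_mult[of "nat m"] by simp
  next
    case False
    then show ?thesis
      using ae_periods_uminus[OF nat_mult[of "nat (- m)"]] by simp
  qed
qed

lemma AE_int_lattice_periodic:
  fixes u :: "'a::euclidean_space \<Rightarrow> 'b"
  assumes "\<forall>i\<in>Basis. AE x in lebesgue. u (x + T *\<^sub>R i) = u x"
  shows "AE x in lebesgue. \<forall>k\<in>int_lattice. u (x + T *\<^sub>R k) = u x"
proof -
  have "T *\<^sub>R k \<in> ae_periods u" if k: "k \<in> int_lattice" for k
  proof -
    have "T *\<^sub>R k = (\<Sum>i\<in>Basis. (k \<bullet> i) *\<^sub>R (T *\<^sub>R i))"
      by (subst euclidean_representation[symmetric, of k]) (simp add: scaleR_sum_right mult.commute)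
    also have "\<dots> \<in> ae_periods u"
    proof (intro ae_periods_sum finite_Basis)
      fix i :: 'a assume i: "i \<in> Basis"
      then obtain m where "k \<bullet> i = of_int m"
        using k by (auto simp: int_lattice_def elim!: Ints_cases)
      moreover have "T *\<^sub>R i \<in> ae_periods u"
        using assms i by (simp add: ae_periods_def)
      ultimately show "(k \<bullet> i) *\<^sub>R (T *\<^sub>R i) \<in> ae_periods u"
        using ae_periods_of_int_scaleR[of "T *\<^sub>R i" u m] by simp
    qed
    finally show ?thesis .
  qed
  then show ?thesis
    unfolding ae_periods_def by (intro AE_ball_countable' countable_int_lattice) auto
qed

section \<open>Integral of a negative power of the norm outside a ball\<close>

lemma omega_eq_unit_ball_vol: "omega TYPE('a::euclidean_space) = unit_ball_vol DIM('a)"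
  using content_ball[of 1 "0::'a"] by (simp add: omega_def measure_completion)

lemma omega_nonneg: "0 \<le> omega TYPE('a::euclidean_space)"
  by (simp add: omega_def)

lemma nn_integral_powr_atLeast:
  fixes r0 q :: real
  assumes "r0 > 0" "q > 0"
  shows "(\<integral>\<^sup>+r\<in>{r0..}. ennreal (q * r powr (- q - 1)) \<partial>lborel) = ennreal (r0 powr - q)"
proof -
  have "(\<integral>\<^sup>+r\<in>{r0..}. ennreal (q * r powr (- q - 1)) \<partial>lborel) = ennreal (0 - (- (r0 powr - q)))"
  proof (rule nn_integral_FTC_atLeast)
    show "((\<lambda>r. - (r powr - q)) \<longlongrightarrow> 0) at_top"
      using tendsto_minus[OF tendsto_neg_powr[of "- q" "\<lambda>x. x" at_top]] assms
      by (simp add: filterlim_ident)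
    fix r assume "r0 \<le> r"
    with assms have "r > 0" by simp
    then show "((\<lambda>r. - (r powr - q)) has_real_derivative q * r powr (- q - 1)) (at r)"
      by (auto intro!: derivative_eq_intros)
    show "0 \<le> q * r powr (- q - 1)"
      using assms by simp
  qed measurable
  then show ?thesis by simp
qed

lemma emeasure_annulus:
  assumes "0 < \<rho>" "\<rho> \<le> r"
  shows "emeasure lborel {w::'a::euclidean_space. \<rho> \<le> norm w \<and> norm w \<le> r}
       = ennreal (omega TYPE('a) * r ^ DIM('a) - omega TYPE('a) * \<rho> ^ DIM('a))"
proof -
  have "{w::'a. \<rho> \<le> norm w \<and> norm w \<le> r} = cball 0 r - ball 0 \<rho>"
    by auto
  moreover have "emeasure lborel (cball (0::'a) r - ball 0 \<rho>)
      = emeasure lborel (cball (0::'a) r) - emeasure lborel (ball (0::'a) \<rho>)"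
    using assms by (intro emeasure_Diff) (auto simp: emeasure_ball)
  moreover have "\<rho> ^ DIM('a) \<le> r ^ DIM('a)"
    using assms by (intro power_mono) auto
  ultimately show ?thesis
    using assms by (simp add: emeasure_ball emeasure_cball omega_eq_unit_ball_vol ennreal_minus
        flip: right_diff_distrib)
qed

lemma nn_integral_annulus_profile:
  fixes \<rho> a \<omega> :: real and n :: nat
  assumes rho: "\<rho> > 0" and a: "a > 0" and om: "\<omega> \<ge> 0"
  defines "q \<equiv> n + a"
  shows "(\<integral>\<^sup>+r\<in>{\<rho>..}. ennreal (q * r powr (- q - 1) * (\<omega> * r ^ n - \<omega> * \<rho> ^ n)) \<partial>lborel)
       = ennreal (n * \<omega> * \<rho> powr - a / a)"
proof -
  define F where "F r = \<omega> * \<rho> ^ n * r powr - q - q * \<omega> / a * r powr - a" for r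
  have "(\<integral>\<^sup>+r\<in>{\<rho>..}. ennreal (q * r powr (- q - 1) * (\<omega> * r ^ n - \<omega> * \<rho> ^ n)) \<partial>lborel)
      = ennreal (0 - F \<rho>)"
  proof (rule nn_integral_FTC_atLeast)
    have "(F \<longlongrightarrow> \<omega> * \<rho> ^ n * 0 - q * \<omega> / a * 0) at_top"
      unfolding F_def using a by (intro tendsto_intros tendsto_neg_powr) (auto simp: q_def filterlim_ident)
    then show "(F \<longlongrightarrow> 0) at_top"
      by simp
    fix r assume r: "\<rho> \<le> r"
    with rho have "r > 0" by simp
    have "r powr (- q - 1) * r ^ n = r powr (- a - 1)"
      using \<open>r > 0\<close> by (simp add: q_def powr_realpow[symmetric] powr_add[symmetric])
    then have "\<omega> * \<rho> ^ n * (- q * r powr (- q - 1)) - q * \<omega> / a * (- a * r powr (- a - 1))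
        = q * r powr (- q - 1) * (\<omega> * r ^ n - \<omega> * \<rho> ^ n)"
      using a by (simp add: algebra_simps)
    moreover have "(F has_real_derivative
        \<omega> * \<rho> ^ n * (- q * r powr (- q - 1)) - q * \<omega> / a * (- a * r powr (- a - 1))) (at r)"
      unfolding F_def by (intro DERIV_diff DERIV_cmult has_real_derivative_powr \<open>r > 0\<close>)
    ultimately show "(F has_real_derivative q * r powr (- q - 1) * (\<omega> * r ^ n - \<omega> * \<rho> ^ n)) (at r)"
      by simp
    have "\<rho> ^ n \<le> r ^ n"
      using r rho by (intro power_mono) auto
    then show "0 \<le> q * r powr (- q - 1) * (\<omega> * r ^ n - \<omega> * \<rho> ^ n)"
      using a om by (intro mult_nonneg_nonneg) (auto simp: q_def mult_left_mono)
  qed measurable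
  also have "0 - F \<rho> = n * \<omega> * \<rho> powr - a / a"
  proof -
    have "\<rho> ^ n * \<rho> powr - q = \<rho> powr - a"
      using rho by (simp add: q_def powr_realpow[symmetric] powr_add[symmetric])
    then show ?thesis
      using a by (simp add: F_def q_def field_simps)
  qed
  finally show ?thesis .
qed

lemma nn_integral_outside_ball_eq_annuli:
  fixes \<rho> q :: real
  assumes rho: "\<rho> > 0" and q: "q > 0"
  shows "(\<integral>\<^sup>+w\<in>- ball (0::'a::euclidean_space) \<rho>. ennreal (1 / norm w powr q) \<partial>lborel)
       = (\<integral>\<^sup>+r\<in>{\<rho>..}. ennreal (q * r powr (- q - 1)) * emeasure lborel {w::'a. \<rho> \<le> norm w \<and> norm w \<le> r}
            \<partial>lborel)"
proof -
  define A where "A = {wr :: 'a \<times> real. \<rho> \<le> norm (fst wr) \<and> norm (fst wr) \<le> snd wr}"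
  have "A = {wr \<in> space (lborel \<Otimes>\<^sub>M lborel). \<rho> \<le> norm (fst wr) \<and> norm (fst wr) \<le> snd wr}"
    by (auto simp: A_def space_pair_measure)
  also have "\<dots> \<in> sets (lborel \<Otimes>\<^sub>M lborel)"
    by measurable
  finally have [measurable]: "A \<in> sets (lborel \<Otimes>\<^sub>M lborel)" .
  have layer: "ennreal (1 / norm w powr q) * indicator (- ball 0 \<rho>) w
      = (\<integral>\<^sup>+r. ennreal (q * r powr (- q - 1)) * indicator A (w, r) \<partial>lborel)" for w :: 'a
  proof (cases "\<rho> \<le> norm w")
    case True
    then have "(\<integral>\<^sup>+r. ennreal (q * r powr (- q - 1)) * indicator A (w, r) \<partial>lborel)
        = (\<integral>\<^sup>+r\<in>{norm w..}. ennreal (q * r powr (- q - 1)) \<partial>lborel)"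
      by (intro nn_integral_cong) (auto simp: A_def indicator_def)
    also have "\<dots> = ennreal (norm w powr - q)"
      using True rho q by (intro nn_integral_powr_atLeast) auto
    finally show ?thesis
      using True by (simp add: powr_minus_divide)
  qed (auto simp: A_def indicator_def)
  have slice: "(\<integral>\<^sup>+w. ennreal (q * r powr (- q - 1)) * indicator A (w, r) \<partial>lborel)
      = ennreal (q * r powr (- q - 1)) * emeasure lborel {w::'a. \<rho> \<le> norm w \<and> norm w \<le> r} * indicator {\<rho>..} r"
    for r
  proof (cases "\<rho> \<le> r")
    case True
    then show ?thesis
      by (subst nn_integral_cmult_indicator[symmetric]) (auto simp: A_def indicator_def)
  next
    case False
    then have "indicator A (w, r) = (0 :: ennreal)" for w :: 'a
      by (auto simp: A_def)
    with False show ?thesis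
      by simp
  qed
  have "(\<integral>\<^sup>+w\<in>- ball (0::'a) \<rho>. ennreal (1 / norm w powr q) \<partial>lborel)
      = (\<integral>\<^sup>+w. (\<integral>\<^sup>+r. ennreal (q * r powr (- q - 1)) * indicator A (w, r) \<partial>lborel) \<partial>lborel)"
    by (simp add: layer)
  also have "\<dots> = (\<integral>\<^sup>+r. (\<integral>\<^sup>+w. ennreal (q * r powr (- q - 1)) * indicator A (w, r) \<partial>lborel) \<partial>lborel)"
    by (rule lborel_pair.Fubini'[symmetric]) measurable
  finally show ?thesis
    by (simp only: slice)
qed

lemma nn_integral_outside_ball_norm_powr_lborel:
  fixes \<rho> a :: real
  assumes rho: "\<rho> > 0" and a: "a > 0"
  shows "(\<integral>\<^sup>+w\<in>- ball (0::'a::euclidean_space) \<rho>. ennreal (1 / norm w powr (DIM('a) + a)) \<partial>lborel)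
       = ennreal (DIM('a) * omega TYPE('a) * \<rho> powr - a / a)"
proof -
  define q where "q = DIM('a) + a"
  define \<omega> where "\<omega> = omega TYPE('a)"
  have q: "q > 0"
    using a by (simp add: q_def)
  have om: "\<omega> \<ge> 0"
    unfolding \<omega>_def by (rule omega_nonneg)
  have "(\<integral>\<^sup>+w\<in>- ball (0::'a) \<rho>. ennreal (1 / norm w powr q) \<partial>lborel)
      = (\<integral>\<^sup>+r\<in>{\<rho>..}. ennreal (q * r powr (- q - 1)) * emeasure lborel {w::'a. \<rho> \<le> norm w \<and> norm w \<le> r}
           \<partial>lborel)"
    by (rule nn_integral_outside_ball_eq_annuli[OF rho q])
  also have "\<dots> = (\<integral>\<^sup>+r\<in>{\<rho>..}. ennreal (q * r powr (- q - 1) * (\<omega> * r ^ DIM('a) - \<omega> * \<rho> ^ DIM('a))) \<partial>lborel)"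
    using rho q by (intro nn_integral_cong) (simp add: emeasure_annulus \<omega>_def ennreal_mult' split: split_indicator)
  also have "\<dots> = ennreal (DIM('a) * \<omega> * \<rho> powr - a / a)"
    unfolding q_def by (rule nn_integral_annulus_profile[OF rho a om])
  finally show ?thesis
    by (simp add: q_def \<omega>_def)
qed

lemma nn_integral_outside_ball_norm_powr:
  fixes x :: "'a::euclidean_space" and \<rho> a :: real
  assumes "\<rho> > 0" and "a > 0"
  shows "(\<integral>\<^sup>+y\<in>- ball x \<rho>. ennreal (1 / norm (x - y) powr (DIM('a) + a)) \<partial>lebesgue)
       = ennreal (DIM('a) * omega TYPE('a) * \<rho> powr - a / a)"
proof -
  let ?g = "\<lambda>y. ennreal (1 / norm (x - y) powr (DIM('a) + a)) * indicator (- ball x \<rho>) y"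
  have "?g \<in> borel_measurable lebesgue"
    by (intro measurable_completion) measurable
  then have "(\<integral>\<^sup>+y. ?g y \<partial>lebesgue) = (\<integral>\<^sup>+w. ?g (w + x) \<partial>lebesgue)"
    by (rule nn_integral_lebesgue_translate[symmetric])
  also have "\<dots> = (\<integral>\<^sup>+w\<in>- ball (0::'a) \<rho>. ennreal (1 / norm w powr (DIM('a) + a)) \<partial>lborel)"
    by (simp add: nn_integral_completion indicator_def dist_norm)
  finally show ?thesis
    using nn_integral_outside_ball_norm_powr_lborel[OF assms] by simp
qed

section \<open>The periodized tail kernel\<close>

lemma inverse_powr_le_scaled:
  fixes D Y \<rho> h q :: real
  assumes "0 < \<rho>" "\<rho> \<le> D" "0 \<le> h" "0 < Y" "Y \<le> D + h" "0 \<le> q"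
  shows "1 / D powr q \<le> ((\<rho> + h) / \<rho>) powr q * (1 / Y powr q)"
proof -
  have "h * \<rho> \<le> h * D" "Y * \<rho> \<le> (D + h) * \<rho>"
    using assms by (auto intro: mult_left_mono mult_right_mono)
  then have "Y * \<rho> \<le> (\<rho> + h) * D"
    by (simp add: algebra_simps)
  then have "Y \<le> (\<rho> + h) / \<rho> * D"
    using assms by (simp add: field_simps)
  then have "Y powr q \<le> ((\<rho> + h) / \<rho>) powr q * D powr q"
    using assms by (simp add: powr_mono2 flip: powr_mult)
  then show ?thesis
    using assms by (simp add: field_simps)
qed

lemma ennreal_le_divide_of_mult_le:
  assumes "0 < c" "0 \<le> b" "ennreal c * x \<le> ennreal b"
  shows "x \<le> ennreal (b / c)"
proof -
  have "ennreal (1 / c) * ennreal c = 1"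
    using assms(1) by (simp flip: ennreal_mult)
  then have "x = ennreal (1 / c) * (ennreal c * x)"
    by (simp flip: mult.assoc)
  also have "\<dots> \<le> ennreal (1 / c) * ennreal b"
    using assms(3) by (rule mult_left_mono) simp
  also have "\<dots> = ennreal (b / c)"
    using assms(1,2) by (simp flip: ennreal_mult)
  finally show ?thesis .
qed

lemma ennreal_divide_le_of_le_mult:
  assumes "0 < c" "0 \<le> b" "ennreal b \<le> ennreal c * x"
  shows "ennreal (b / c) \<le> x"
proof -
  have inv: "ennreal (1 / c) * ennreal c = 1"
    using assms(1) by (simp flip: ennreal_mult)
  have "ennreal (b / c) = ennreal (1 / c) * ennreal b"
    using assms(1,2) by (simp flip: ennreal_mult)
  also have "\<dots> \<le> ennreal (1 / c) * (ennreal c * x)"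
    using assms(3) by (rule mult_left_mono) simp
  also have "\<dots> = x"
    using inv by (simp flip: mult.assoc)
  finally show ?thesis .
qed

lemma shifted_cell_distance_bounds:
  fixes x z v w :: "'a::euclidean_space"
  assumes x: "x \<in> cell T" and z: "z \<in> half_open_cell T" and v: "v \<in> half_open_cell T"
  defines "h \<equiv> T * sqrt DIM('a)"
  shows "norm (x - (v + w)) \<le> norm (x - (z + w)) + h"
    and "norm (x - (z + w)) \<le> norm (x - (v + w)) + h"
    and "norm (z + w) \<le> norm (x - (z + w)) + h"
    and "norm (x - (z + w)) \<le> norm (z + w) + h"
proof -
  have "norm (x - 0) \<le> h" "norm (0 - x) \<le> h" "norm ((v + w) - (z + w)) \<le> h" "norm ((z + w) - (v + w)) \<le> h"
    using norm_cell_le[OF x] norm_diff_cell_le[of v T z] norm_diff_cell_le[of z T v] v z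
      half_open_cell_subset_cell by (auto simp: h_def)
  then show "norm (x - (v + w)) \<le> norm (x - (z + w)) + h"
    and "norm (x - (z + w)) \<le> norm (x - (v + w)) + h"
    by (auto intro: norm_diff_triangle_le)
  show "norm (z + w) \<le> norm (x - (z + w)) + h"
    using norm_triangle_ineq4[of x "x - (z + w)"] \<open>norm (x - 0) \<le> h\<close> by (simp add: add.commute)
  show "norm (x - (z + w)) \<le> norm (z + w) + h"
    using norm_triangle_ineq4[of x "z + w"] \<open>norm (x - 0) \<le> h\<close> by simp
qed

lemma tail_term_le_shifted:
  fixes x z v w :: "'a::euclidean_space" and T R q :: real
  defines "h \<equiv> T * sqrt DIM('a)"
  assumes x: "x \<in> cell T" and z: "z \<in> half_open_cell T" and v: "v \<in> half_open_cell T"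
    and R: "R > 2 * h" and q: "q \<ge> 0"
  shows "indicator (- ball 0 R) (z + w) * ennreal (1 / norm (x - (z + w)) powr q)
       \<le> ennreal (((R - h) / (R - 2 * h)) powr q)
           * (ennreal (1 / norm (x - (v + w)) powr q) * indicator (- ball x (R - 2 * h)) (v + w))"
proof (cases "R \<le> norm (z + w)")
  case True
  note bounds = shifted_cell_distance_bounds[OF x z v, of w, folded h_def]
  have "0 \<le> h"
    using norm_cell_le[OF x] norm_ge_zero[of x] unfolding h_def by linarith
  then have "1 / norm (x - (z + w)) powr q
      \<le> ((R - 2 * h + h) / (R - 2 * h)) powr q * (1 / norm (x - (v + w)) powr q)"
    using True R q bounds by (intro inverse_powr_le_scaled) auto
  then have "ennreal (1 / norm (x - (z + w)) powr q)
      \<le> ennreal (((R - h) / (R - 2 * h)) powr q) * ennreal (1 / norm (x - (v + w)) powr q)"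
    by (simp add: ennreal_leI flip: ennreal_mult')
  moreover have "R - 2 * h \<le> norm (x - (v + w))"
    using True bounds by linarith
  ultimately show ?thesis
    using True by (auto simp: dist_norm split: split_indicator)
qed simp

lemma shifted_le_tail_term:
  fixes x z v w :: "'a::euclidean_space" and T R q :: real
  defines "h \<equiv> T * sqrt DIM('a)"
  assumes x: "x \<in> cell T" and z: "z \<in> half_open_cell T" and v: "v \<in> half_open_cell T"
    and R: "R > 2 * h" and q: "q \<ge> 0"
  shows "ennreal (1 / norm (x - (v + w)) powr q) * indicator (- ball x (R + 2 * h)) (v + w)
       \<le> ennreal (((R + 2 * h) / (R + h)) powr q)
           * (indicator (- ball 0 R) (z + w) * ennreal (1 / norm (x - (z + w)) powr q))"
proof (cases "R + 2 * h \<le> norm (x - (v + w))")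
  case True
  note bounds = shifted_cell_distance_bounds[OF x z v, of w, folded h_def]
  have "0 \<le> h"
    using norm_cell_le[OF x] norm_ge_zero[of x] unfolding h_def by linarith
  then have "1 / norm (x - (v + w)) powr q
      \<le> ((R + h + h) / (R + h)) powr q * (1 / norm (x - (z + w)) powr q)"
    using True R q bounds by (intro inverse_powr_le_scaled) auto
  moreover have "R + h + h = R + 2 * h"
    by simp
  ultimately have "ennreal (1 / norm (x - (v + w)) powr q)
      \<le> ennreal (((R + 2 * h) / (R + h)) powr q) * ennreal (1 / norm (x - (z + w)) powr q)"
    by (simp add: ennreal_leI flip: ennreal_mult')
  moreover have "R \<le> norm (z + w)"
    using True bounds by linarith
  ultimately show ?thesis
    using True by (auto simp: dist_norm[of x] split: split_indicator)
qed (simp add: dist_norm)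

text \<open>The factor multiplying \<open>|u x - u z|^p\<close> once the part of the inner Gagliardo integral
  outside \<open>B_R\<close> is folded onto the cell by periodicity.\<close>

definition tail_kernel :: "real \<Rightarrow> real \<Rightarrow> real \<Rightarrow> 'a::euclidean_space \<Rightarrow> 'a \<Rightarrow> ennreal" where
  "tail_kernel T R q x z =
     (\<integral>\<^sup>+k. indicator (- ball 0 R) (z + T *\<^sub>R k) * ennreal (1 / norm (x - (z + T *\<^sub>R k)) powr q)
        \<partial>count_space int_lattice)"

lemma tail_kernel_le:
  fixes x z :: "'a::euclidean_space" and T R a :: real
  assumes T: "T > 0" and a: "a > 0" and R: "R > 2 * (T * sqrt DIM('a))"
    and x: "x \<in> cell T" and z: "z \<in> half_open_cell T"
  defines "h \<equiv> T * sqrt DIM('a)" and "q \<equiv> DIM('a) + a"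
  shows "tail_kernel T R q x z
       \<le> ennreal (((R - h) / (R - 2 * h)) powr q * (DIM('a) * omega TYPE('a) * (R - 2 * h) powr - a / a)
                  / T ^ DIM('a))"
proof -
  define c where "c = ((R - h) / (R - 2 * h)) powr q"
  define K where "K = DIM('a) * omega TYPE('a) * (R - 2 * h) powr - a / a"
  define \<psi> where "\<psi> y = ennreal (1 / norm (x - y) powr q) * indicator (- ball x (R - 2 * h)) y" for y
  have h: "h \<ge> 0" "R > 2 * h" and q: "q \<ge> 0"
    using T R a by (simp_all add: h_def q_def)
  have K: "K \<ge> 0"
    using a omega_nonneg[where 'a='a] by (simp add: K_def)
  have \<psi>_meas: "\<psi> \<in> borel_measurable lebesgue"
    unfolding \<psi>_def by (intro measurable_completion) measurable
  have "ennreal (T ^ DIM('a)) * tail_kernel T R q x z \<le> (\<integral>\<^sup>+y. ennreal c * \<psi> y \<partial>lebesgue)"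
    unfolding tail_kernel_def
  proof (rule lattice_sum_le_nn_integral[OF T])
    fix k v :: 'a
    assume "v \<in> half_open_cell T"
    then show "indicator (- ball 0 R) (z + T *\<^sub>R k) * ennreal (1 / norm (x - (z + T *\<^sub>R k)) powr q)
        \<le> ennreal c * \<psi> (v + T *\<^sub>R k)"
      using tail_term_le_shifted[of x T z v R q "T *\<^sub>R k"] x z h q by (simp add: \<psi>_def c_def h_def)
  qed (use \<psi>_meas in measurable)
  also have "\<dots> = ennreal c * (\<integral>\<^sup>+y. \<psi> y \<partial>lebesgue)"
    using \<psi>_meas by (rule nn_integral_cmult)
  also have "(\<integral>\<^sup>+y. \<psi> y \<partial>lebesgue) = ennreal K"
    using a h by (simp add: \<psi>_def K_def q_def nn_integral_outside_ball_norm_powr)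
  also have "ennreal c * ennreal K = ennreal (c * K)"
    by (simp add: c_def ennreal_mult')
  finally have "tail_kernel T R q x z \<le> ennreal (c * K / T ^ DIM('a))"
    using T K by (intro ennreal_le_divide_of_mult_le) (auto simp: c_def)
  then show ?thesis
    by (simp add: c_def K_def)
qed

lemma tail_kernel_ge:
  fixes x z :: "'a::euclidean_space" and T R a :: real
  assumes T: "T > 0" and a: "a > 0" and R: "R > 2 * (T * sqrt DIM('a))"
    and x: "x \<in> cell T" and z: "z \<in> half_open_cell T"
  defines "h \<equiv> T * sqrt DIM('a)" and "q \<equiv> DIM('a) + a"
  shows "ennreal (DIM('a) * omega TYPE('a) * (R + 2 * h) powr - a / a
                  / (((R + 2 * h) / (R + h)) powr q * T ^ DIM('a)))
       \<le> tail_kernel T R q x z"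
proof -
  define c where "c = ((R + 2 * h) / (R + h)) powr q"
  define K where "K = DIM('a) * omega TYPE('a) * (R + 2 * h) powr - a / a"
  define \<psi> where "\<psi> y = ennreal (1 / norm (x - y) powr q) * indicator (- ball x (R + 2 * h)) y" for y
  have h: "h \<ge> 0" "R > 2 * h" and q: "q \<ge> 0"
    using T R a by (simp_all add: h_def q_def)
  have K: "K \<ge> 0"
    using a omega_nonneg[where 'a='a] by (simp add: K_def)
  have c: "c > 0"
    using h by (simp add: c_def)
  have \<psi>_meas: "\<psi> \<in> borel_measurable lebesgue"
    unfolding \<psi>_def by (intro measurable_completion) measurable
  have "ennreal K = (\<integral>\<^sup>+y. \<psi> y \<partial>lebesgue)"
    using a h by (simp add: \<psi>_def K_def q_def nn_integral_outside_ball_norm_powr)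
  also have "\<dots> \<le> ennreal (T ^ DIM('a)) * (\<integral>\<^sup>+k. ennreal c *
      (indicator (- ball 0 R) (z + T *\<^sub>R k) * ennreal (1 / norm (x - (z + T *\<^sub>R k)) powr q)) \<partial>count_space int_lattice)"
  proof (rule nn_integral_le_lattice_sum[OF T \<psi>_meas])
    fix k v :: 'a
    assume "v \<in> half_open_cell T"
    then show "\<psi> (v + T *\<^sub>R k) \<le> ennreal c *
        (indicator (- ball 0 R) (z + T *\<^sub>R k) * ennreal (1 / norm (x - (z + T *\<^sub>R k)) powr q))"
      using shifted_le_tail_term[of x T z v R q "T *\<^sub>R k"] x z h q by (simp add: \<psi>_def c_def h_def)
  qed
  also have "\<dots> = ennreal (T ^ DIM('a) * c) * tail_kernel T R q x z"
    using c T by (simp add: tail_kernel_def nn_integral_cmult borel_measurable_count_space ennreal_mult mult.assoc)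
  finally have "ennreal (K / (T ^ DIM('a) * c)) \<le> tail_kernel T R q x z"
    using T K c by (intro ennreal_divide_le_of_le_mult) auto
  then show ?thesis
    by (simp add: c_def K_def mult.commute)
qed

section \<open>The Gagliardo functionals\<close>

lemma sigma_finite_lebesgue: "sigma_finite_measure (lebesgue :: 'a::euclidean_space measure)"
proof -
  obtain A :: "'a set set" where
    A: "countable A" "A \<subseteq> sets lborel" "\<Union>A = space lborel" "\<forall>a\<in>A. emeasure lborel a \<noteq> \<infinity>"
    using sigma_finite_lborel unfolding sigma_finite_measure_def by blast
  then show ?thesis
    unfolding sigma_finite_measure_def by (intro exI[of _ A]) (auto simp: subset_eq)
qed

lemmas borel_measurable_nn_integral_lebesgue [measurable (raw)] =
  sigma_finite_measure.borel_measurable_nn_integral[OF sigma_finite_lebesgue]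

lemma lebesgue_ident_borel: "(\<lambda>x. x) \<in> (lebesgue :: 'a::euclidean_space measure) \<rightarrow>\<^sub>M borel"
  by (rule measurable_completion) (simp add: measurable_ident_sets)

lemma fst_lebesgue_pair_measurable [measurable]:
  "fst \<in> (lebesgue \<Otimes>\<^sub>M lebesgue :: ('a::euclidean_space \<times> 'a) measure) \<rightarrow>\<^sub>M borel"
  by (rule measurable_compose[OF measurable_fst lebesgue_ident_borel, simplified])

lemma snd_lebesgue_pair_measurable [measurable]:
  "snd \<in> (lebesgue \<Otimes>\<^sub>M lebesgue :: ('a::euclidean_space \<times> 'a) measure) \<rightarrow>\<^sub>M borel"
  by (rule measurable_compose[OF measurable_snd lebesgue_ident_borel, simplified])

lemma borel_measurable_difference_quotient [measurable]:
  fixes u :: "'a::euclidean_space \<Rightarrow> real"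
  assumes [measurable]: "u \<in> borel_measurable lebesgue"
  shows "(\<lambda>(x, y). ennreal (\<bar>u x - u y\<bar> powr p / norm (x - y) powr r)) \<in> borel_measurable (lebesgue \<Otimes>\<^sub>M lebesgue)"
    and "(\<lambda>(x, y). ennreal (\<bar>u x - u y\<bar> powr p)) \<in> borel_measurable (lebesgue \<Otimes>\<^sub>M lebesgue)"
proof -
  have [measurable]: "(\<lambda>z. u (fst z)) \<in> borel_measurable (lebesgue \<Otimes>\<^sub>M lebesgue)"
      "(\<lambda>z. u (snd z)) \<in> borel_measurable (lebesgue \<Otimes>\<^sub>M lebesgue)"
    by (auto intro: measurable_compose[OF measurable_fst] measurable_compose[OF measurable_snd])
  show "(\<lambda>(x, y). ennreal (\<bar>u x - u y\<bar> powr p / norm (x - y) powr r)) \<in> borel_measurable (lebesgue \<Otimes>\<^sub>M lebesgue)"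
    "(\<lambda>(x, y). ennreal (\<bar>u x - u y\<bar> powr p)) \<in> borel_measurable (lebesgue \<Otimes>\<^sub>M lebesgue)"
    unfolding case_prod_beta by measurable
qed

lemma set_nn_integral_iterated_cmult:
  fixes g :: "'a \<Rightarrow> 'b \<Rightarrow> ennreal"
  assumes N: "sigma_finite_measure N"
    and g: "(\<lambda>(x, z). g x z) \<in> borel_measurable (M \<Otimes>\<^sub>M N)" and A: "A \<in> sets M" and B: "B \<in> sets N"
  shows "c * (\<integral>\<^sup>+x\<in>A. (\<integral>\<^sup>+z\<in>B. g x z \<partial>N) \<partial>M) = (\<integral>\<^sup>+x\<in>A. (\<integral>\<^sup>+z\<in>B. c * g x z \<partial>N) \<partial>M)"
proof -
  have gB: "(\<lambda>(x, z). g x z * indicator B z) \<in> borel_measurable (M \<Otimes>\<^sub>M N)"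
    using g B by measurable
  have "c * (\<integral>\<^sup>+x\<in>A. (\<integral>\<^sup>+z\<in>B. g x z \<partial>N) \<partial>M) = (\<integral>\<^sup>+x\<in>A. c * (\<integral>\<^sup>+z\<in>B. g x z \<partial>N) \<partial>M)"
    using sigma_finite_measure.borel_measurable_nn_integral[OF N gB] A
    by (subst nn_integral_cmult[symmetric]) (auto simp: mult.assoc)
  also have "\<dots> = (\<integral>\<^sup>+x\<in>A. (\<integral>\<^sup>+z\<in>B. c * g x z \<partial>N) \<partial>M)"
  proof (intro nn_integral_cong)
    fix x assume "x \<in> space M"
    then have "(\<lambda>z. g x z * indicator B z) \<in> borel_measurable N"
      using measurable_Pair2[OF gB] by simp
    then show "c * (\<integral>\<^sup>+z\<in>B. g x z \<partial>N) * indicator A x = (\<integral>\<^sup>+z\<in>B. c * g x z \<partial>N) * indicator A x"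
      by (simp add: nn_integral_cmult[symmetric] mult.assoc)
  qed
  finally show ?thesis .
qed

lemma set_nn_integral_kernel_bounds:
  fixes g K :: "'a \<Rightarrow> 'b \<Rightarrow> ennreal"
  assumes N: "sigma_finite_measure N"
    and g: "(\<lambda>(x, z). g x z) \<in> borel_measurable (M \<Otimes>\<^sub>M N)" and A: "A \<in> sets M" and B: "B \<in> sets N"
  shows "(\<And>x z. x \<in> A \<Longrightarrow> z \<in> B \<Longrightarrow> K x z \<le> c) \<Longrightarrow>
      (\<integral>\<^sup>+x\<in>A. (\<integral>\<^sup>+z\<in>B. g x z * K x z \<partial>N) \<partial>M) \<le> c * (\<integral>\<^sup>+x\<in>A. (\<integral>\<^sup>+z\<in>B. g x z \<partial>N) \<partial>M)"
    and "(\<And>x z. x \<in> A \<Longrightarrow> z \<in> B \<Longrightarrow> c \<le> K x z) \<Longrightarrow>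
      c * (\<integral>\<^sup>+x\<in>A. (\<integral>\<^sup>+z\<in>B. g x z \<partial>N) \<partial>M) \<le> (\<integral>\<^sup>+x\<in>A. (\<integral>\<^sup>+z\<in>B. g x z * K x z \<partial>N) \<partial>M)"
proof -
  note cmult = set_nn_integral_iterated_cmult[OF N g A B]
  show "(\<integral>\<^sup>+x\<in>A. (\<integral>\<^sup>+z\<in>B. g x z * K x z \<partial>N) \<partial>M) \<le> c * (\<integral>\<^sup>+x\<in>A. (\<integral>\<^sup>+z\<in>B. g x z \<partial>N) \<partial>M)"
    if K: "\<And>x z. x \<in> A \<Longrightarrow> z \<in> B \<Longrightarrow> K x z \<le> c"
  proof -
    have "g x z * K x z * indicator B z \<le> c * g x z * indicator B z" if "x \<in> A" for x z
    proof (cases "z \<in> B")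
      case True
      have "g x z * K x z \<le> g x z * c"
        using K[OF that True] by (rule mult_left_mono) simp
      then show ?thesis
        using True by (simp add: mult.commute)
    qed simp
    then show ?thesis
      unfolding cmult by (intro nn_integral_mono) (auto intro!: nn_integral_mono split: split_indicator)
  qed
  show "c * (\<integral>\<^sup>+x\<in>A. (\<integral>\<^sup>+z\<in>B. g x z \<partial>N) \<partial>M) \<le> (\<integral>\<^sup>+x\<in>A. (\<integral>\<^sup>+z\<in>B. g x z * K x z \<partial>N) \<partial>M)"
    if K: "\<And>x z. x \<in> A \<Longrightarrow> z \<in> B \<Longrightarrow> c \<le> K x z"
  proof -
    have "c * g x z * indicator B z \<le> g x z * K x z * indicator B z" if "x \<in> A" for x z
    proof (cases "z \<in> B")
      case True
      have "g x z * c \<le> g x z * K x z"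
        using K[OF that True] by (rule mult_left_mono) simp
      then show ?thesis
        using True by (simp add: mult.commute)
    qed simp
    then show ?thesis
      unfolding cmult by (intro nn_integral_mono) (auto intro!: nn_integral_mono split: split_indicator)
  qed
qed

lemma cell_lebesgue [measurable]: "cell T \<in> sets (lebesgue :: 'a::euclidean_space measure)"
  by (simp add: cell_def)

lemma gag_restr_Un:
  fixes u :: "'a::euclidean_space \<Rightarrow> real"
  assumes [measurable]: "u \<in> borel_measurable lebesgue" "A \<in> sets lebesgue" "B \<in> sets lebesgue"
    and disj: "A \<inter> B = {}"
  shows "gag_restr T s p u (A \<union> B) = gag_restr T s p u A + gag_restr T s p u B"
proof -
  define f where "f x y = ennreal (\<bar>u x - u y\<bar> powr p / norm (x - y) powr (DIM('a) + s * p))" for x y :: 'a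
  have [measurable]: "(\<lambda>(x, y). f x y) \<in> borel_measurable (lebesgue \<Otimes>\<^sub>M lebesgue)"
    unfolding f_def by (rule borel_measurable_difference_quotient(1)) measurable
  have [measurable]: "f x \<in> borel_measurable lebesgue" for x
    unfolding f_def by measurable
  have "indicator (A \<union> B) y = (indicator A y + indicator B y :: ennreal)" for y
    using disj by (auto split: split_indicator)
  then have inner: "(\<integral>\<^sup>+y\<in>A \<union> B. f x y \<partial>lebesgue) = (\<integral>\<^sup>+y\<in>A. f x y \<partial>lebesgue) + (\<integral>\<^sup>+y\<in>B. f x y \<partial>lebesgue)" for x
    by (simp add: distrib_left nn_integral_add)
  have gag_restr_f: "gag_restr T s p u E = (\<integral>\<^sup>+x\<in>cell T. (\<integral>\<^sup>+y\<in>E. f x y \<partial>lebesgue) \<partial>lebesgue)" for E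
    by (simp add: gag_restr_def f_def)
  have "gag_restr T s p u (A \<union> B)
      = (\<integral>\<^sup>+x\<in>cell T. (\<integral>\<^sup>+y\<in>A. f x y \<partial>lebesgue) + (\<integral>\<^sup>+y\<in>B. f x y \<partial>lebesgue) \<partial>lebesgue)"
    by (simp only: gag_restr_f inner)
  also have "\<dots> = gag_restr T s p u A + gag_restr T s p u B"
    by (simp add: gag_restr_f distrib_right nn_integral_add)
  finally show ?thesis .
qed

lemma set_nn_integral_cell_eq_half_open_cell:
  fixes g :: "'a::euclidean_space \<Rightarrow> ennreal"
  shows "(\<integral>\<^sup>+z\<in>cell T. g z \<partial>lebesgue) = (\<integral>\<^sup>+z\<in>half_open_cell T. g z \<partial>lebesgue)"
proof (rule nn_integral_cong_AE)
  show "AE z in lebesgue. g z * indicator (cell T) z = g z * indicator (half_open_cell T) z"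
    using AE_half_open_cell_eq_cell[of T] by eventually_elim (simp add: indicator_def)
qed

lemma F0_eq_half_open_cell:
  "F0 T p u = (\<integral>\<^sup>+x\<in>cell T. (\<integral>\<^sup>+z\<in>half_open_cell T. ennreal (\<bar>u x - u z\<bar> powr p) \<partial>lebesgue) \<partial>lebesgue)"
  by (simp add: F0_def set_nn_integral_cell_eq_half_open_cell)

lemma ennreal_divide_eq_mult:
  "0 \<le> a \<Longrightarrow> ennreal (a / b) = ennreal a * ennreal (1 / b)"
  by (simp flip: ennreal_mult')

lemma Compl_ball_lebesgue [measurable]: "- ball x r \<in> sets (lebesgue :: 'a::euclidean_space measure)"
  using sets.compl_sets[of "ball x r" lebesgue] by (simp add: Compl_eq_Diff_UNIV)

lemma lattice_sum_eq_tail_kernel: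
  fixes u :: "'a::euclidean_space \<Rightarrow> real"
  assumes "\<forall>k\<in>int_lattice. u (z + T *\<^sub>R k) = u z"
  shows "(\<integral>\<^sup>+k. ennreal (\<bar>u x - u (z + T *\<^sub>R k)\<bar> powr p / norm (x - (z + T *\<^sub>R k)) powr q)
              * indicator (- ball 0 R) (z + T *\<^sub>R k) \<partial>count_space int_lattice)
       = ennreal (\<bar>u x - u z\<bar> powr p) * tail_kernel T R q x z"
proof -
  have "(\<integral>\<^sup>+k. ennreal (\<bar>u x - u (z + T *\<^sub>R k)\<bar> powr p / norm (x - (z + T *\<^sub>R k)) powr q)
              * indicator (- ball 0 R) (z + T *\<^sub>R k) \<partial>count_space int_lattice)
      = (\<integral>\<^sup>+k. ennreal (\<bar>u x - u z\<bar> powr p) * (indicator (- ball 0 R) (z + T *\<^sub>R k)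
           * ennreal (1 / norm (x - (z + T *\<^sub>R k)) powr q)) \<partial>count_space int_lattice)"
    using assms by (intro nn_integral_cong) (simp add: ennreal_divide_eq_mult[of "\<bar>u x - u z\<bar> powr p"] mult_ac)
  also have "\<dots> = ennreal (\<bar>u x - u z\<bar> powr p) * tail_kernel T R q x z"
    by (simp add: tail_kernel_def nn_integral_cmult borel_measurable_count_space)
  finally show ?thesis .
qed

lemma gag_restr_Compl_ball_eq:
  fixes u :: "'a::euclidean_space \<Rightarrow> real" and T s p R :: real
  assumes T: "T > 0" and [measurable]: "u \<in> borel_measurable lebesgue"
    and periodic: "AE z in lebesgue. \<forall>k\<in>int_lattice. u (z + T *\<^sub>R k) = u z"
  shows "gag_restr T s p u (- ball 0 R)
       = (\<integral>\<^sup>+x\<in>cell T. (\<integral>\<^sup>+z\<in>half_open_cell T.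
            ennreal (\<bar>u x - u z\<bar> powr p) * tail_kernel T R (DIM('a) + s * p) x z \<partial>lebesgue) \<partial>lebesgue)"
proof -
  define q where "q = DIM('a) + s * p"
  define f where "f x y = ennreal (\<bar>u x - u y\<bar> powr p / norm (x - y) powr q)" for x y :: 'a
  have [measurable]: "f x \<in> borel_measurable lebesgue" for x
    unfolding f_def by measurable
  have "(\<integral>\<^sup>+y\<in>- ball 0 R. f x y \<partial>lebesgue)
      = (\<integral>\<^sup>+z\<in>half_open_cell T. ennreal (\<bar>u x - u z\<bar> powr p) * tail_kernel T R q x z \<partial>lebesgue)" for x
  proof -
    have "(\<integral>\<^sup>+y\<in>- ball 0 R. f x y \<partial>lebesgue)
        = (\<integral>\<^sup>+z\<in>half_open_cell T.
             (\<integral>\<^sup>+k. f x (z + T *\<^sub>R k) * indicator (- ball 0 R) (z + T *\<^sub>R k) \<partial>count_space int_lattice)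
           \<partial>lebesgue)"
      by (rule nn_integral_periodize[OF T]) measurable
    also have "\<dots> = (\<integral>\<^sup>+z\<in>half_open_cell T. ennreal (\<bar>u x - u z\<bar> powr p) * tail_kernel T R q x z \<partial>lebesgue)"
      using periodic
      by (intro nn_integral_cong_AE) (auto simp: f_def lattice_sum_eq_tail_kernel elim!: eventually_mono)
    finally show ?thesis .
  qed
  then show ?thesis
    by (simp add: gag_restr_def f_def q_def)
qed

lemma c2_constant_eq:
  fixes T R a \<omega> :: real and n :: nat
  assumes T: "T > 0" and a: "a > 0" and R: "R > 2 * (T * sqrt (real n))"
  shows "real n * \<omega> * (R / T - 2 * sqrt (real n)) powr (- a) / (a * (T * c2 T R (real n)) powr (real n + a))
       = ((R - T * sqrt (real n)) / (R - 2 * (T * sqrt (real n)))) powr (real n + a) *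
         (real n * \<omega> * (R - 2 * (T * sqrt (real n))) powr (- a) / a) / T ^ n"
proof -
  define h where "h = T * sqrt (real n)"
  define \<rho> where "\<rho> = R - 2 * h"
  define X where "X = (R - h) / \<rho>"
  have h0: "h \<ge> 0" using T by (simp add: h_def)
  have rho: "\<rho> > 0" using R by (simp add: \<rho>_def h_def)
  have X0: "X > 0" using rho h0 by (simp add: X_def \<rho>_def)
  have e1: "R / T - 2 * sqrt (real n) = \<rho> / T" using T by (simp add: \<rho>_def h_def field_simps)
  have e2: "c2 T R (real n) = 1 / X" by (simp add: c2_def X_def \<rho>_def h_def mult.assoc)
  have e3: "(\<rho> / T) powr (- a) = T powr a / \<rho> powr a"
    by (simp add: powr_divide powr_minus_divide)
  have e4: "(T * (1 / X)) powr (real n + a) = T ^ n * T powr a / X powr (real n + a)"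
    using T by (simp add: powr_mult powr_divide powr_add powr_realpow)
  have e5: "\<rho> powr (- a) = 1 / \<rho> powr a" by (simp add: powr_minus_divide)
  have p1: "T powr a > 0" "\<rho> powr a > 0" "X powr (real n + a) > 0" "T ^ n > 0" using T rho X0 by auto
  show ?thesis
    unfolding e1 e2 e3 e4 h_def[symmetric] \<rho>_def[symmetric] X_def[symmetric] e5
    using p1 a by (simp add: field_simps)
qed

lemma c1_constant_eq:
  fixes T R a \<omega> :: real and n :: nat
  assumes T: "T > 0" and a: "a > 0" and R: "R > 2 * (T * sqrt (real n))"
  shows "real n * \<omega> * (R / T + 2 * sqrt (real n)) powr (- a) / (a * (T * c1 T R (real n)) powr (real n + a))
       = (real n * \<omega> * (R + 2 * (T * sqrt (real n))) powr (- a) / a) /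
         (((R + 2 * (T * sqrt (real n))) / (R + T * sqrt (real n))) powr (real n + a) * T ^ n)"
proof -
  define h where "h = T * sqrt (real n)"
  define \<rho> where "\<rho> = R + 2 * h"
  define Y where "Y = \<rho> / (R + h)"
  have h0: "h \<ge> 0" using T by (simp add: h_def)
  have rho: "\<rho> > 0" using R h0 by (simp add: \<rho>_def h_def)
  have Y0: "Y > 0" using rho h0 R by (simp add: Y_def \<rho>_def h_def)
  have e1: "R / T + 2 * sqrt (real n) = \<rho> / T" using T by (simp add: \<rho>_def h_def field_simps)
  have e2: "c1 T R (real n) = Y" by (simp add: c1_def Y_def \<rho>_def h_def mult.assoc)
  have e3: "(\<rho> / T) powr (- a) = T powr a / \<rho> powr a"
    by (simp add: powr_divide powr_minus_divide)
  have e4: "(T * Y) powr (real n + a) = T ^ n * T powr a * Y powr (real n + a)"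
    using T by (simp add: powr_mult powr_add powr_realpow)
  have e5: "\<rho> powr (- a) = 1 / \<rho> powr a" by (simp add: powr_minus_divide)
  have p1: "T powr a > 0" "\<rho> powr a > 0" "Y powr (real n + a) > 0" "T ^ n > 0" using T rho Y0 by auto
  show ?thesis
    unfolding e1 e2 e3 e4 h_def[symmetric] \<rho>_def[symmetric] Y_def[symmetric] e5
    using p1 a by (simp add: field_simps)
qed

lemma gag_restr_Compl_ball_le:
  fixes u :: "'a::euclidean_space \<Rightarrow> real" and T s p R :: real
  assumes T: "T > 0" and sp: "s * p > 0" and R: "R > 2 * (T * sqrt DIM('a))"
    and u: "u \<in> borel_measurable lebesgue"
    and periodic: "AE z in lebesgue. \<forall>k\<in>int_lattice. u (z + T *\<^sub>R k) = u z"
  defines "d \<equiv> real DIM('a)"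
  shows "gag_restr T s p u (- ball 0 R)
       \<le> ennreal (d * omega TYPE('a) * (R / T - 2 * sqrt d) powr (- (s * p))
                   / (s * p * (T * c2 T R d) powr (d + s * p))) * F0 T p u"
  unfolding gag_restr_Compl_ball_eq[OF T u periodic] F0_eq_half_open_cell d_def c2_constant_eq[OF T sp R]
  using sigma_finite_lebesgue borel_measurable_difference_quotient(2)[OF u] cell_lebesgue half_open_cell_lebesgue
  by (rule set_nn_integral_kernel_bounds(1)) (rule tail_kernel_le[OF T sp R])

lemma gag_restr_Compl_ball_ge:
  fixes u :: "'a::euclidean_space \<Rightarrow> real" and T s p R :: real
  assumes T: "T > 0" and sp: "s * p > 0" and R: "R > 2 * (T * sqrt DIM('a))"
    and u: "u \<in> borel_measurable lebesgue"
    and periodic: "AE z in lebesgue. \<forall>k\<in>int_lattice. u (z + T *\<^sub>R k) = u z"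
  defines "d \<equiv> real DIM('a)"
  shows "ennreal (d * omega TYPE('a) * (R / T + 2 * sqrt d) powr (- (s * p))
                   / (s * p * (T * c1 T R d) powr (d + s * p))) * F0 T p u
       \<le> gag_restr T s p u (- ball 0 R)"
  unfolding gag_restr_Compl_ball_eq[OF T u periodic] F0_eq_half_open_cell d_def c1_constant_eq[OF T sp R]
  using sigma_finite_lebesgue borel_measurable_difference_quotient(2)[OF u] cell_lebesgue half_open_cell_lebesgue
  by (rule set_nn_integral_kernel_bounds(2)) (rule tail_kernel_ge[OF T sp R])

theorem mainTheorem1:
  fixes u :: "'a::euclidean_space \<Rightarrow> real" and T p s R :: real
  defines "d \<equiv> real DIM('a)"
  assumes "T > 0" and "p \<ge> 1" and "Lp_torus T p u"
    and "0 < s" and "s < 1" and "R > 2 * T * sqrt d"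
  shows "(gag_restr T s p u (ball 0 R)
           + ennreal (d * omega TYPE('a) * (R / T + 2 * sqrt d) powr (- s * p)
                       / (s * p * (T * c1 T R d) powr (d + s * p))) * F0 T p u
         \<le> Fs T s p u) \<and>
         (Fs T s p u
         \<le> gag_restr T s p u (ball 0 R)
           + ennreal (d * omega TYPE('a) * (R / T - 2 * sqrt d) powr (- s * p)
                       / (s * p * (T * c2 T R d) powr (d + s * p))) * F0 T p u)"
proof -
  have sp: "s * p > 0" and R: "R > 2 * (T * sqrt DIM('a))"
    using assms by (simp_all add: d_def mult.assoc)
  have u: "u \<in> borel_measurable lebesgue"
    and periodic: "AE z in lebesgue. \<forall>k\<in>int_lattice. u (z + T *\<^sub>R k) = u z"
    using \<open>Lp_torus T p u\<close> by (auto simp: Lp_torus_def intro: AE_int_lattice_periodic)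
  have "Fs T s p u = gag_restr T s p u (ball 0 R) + gag_restr T s p u (- ball 0 R)"
    using gag_restr_Un[OF u, of "ball 0 R" "- ball 0 R"] by (simp add: Fs_def)
  then show ?thesis
    using gag_restr_Compl_ball_le[OF \<open>T > 0\<close> sp R u periodic] gag_restr_Compl_ball_ge[OF \<open>T > 0\<close> sp R u periodic]
    by (auto simp: d_def intro: add_left_mono)
qed

end
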